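(* Let $N\ge 1$, $p,q\ge 1$, $d=p+q$, and let $\mathcal{X}\subset\mathbb{R}^p$, $\mathcal{Y}\subset\mathbb{R}^q$ be nonempty, convex, closed and bounded; set $\mathcal{Z}=\mathcal{X}\times\mathcal{Y}$ and $\mathcal{Z}^N=\{[\mathbf z_1;\dots;\mathbf z_N]:\mathbf z_n\in\mathcal Z\}$. For $n=1,\dots,N$ let $f_n:\mathbb{R}^p\times\mathbb{R}^q\to\mathbb{R}$ be differentiable, $\rho$-weakly convex in $\mathbf x$ and $\rho$-weakly concave in $\mathbf y$ on $\mathcal X\times\mathcal Y$, with $\rho>0$. Define for $\mathbf z=[\mathbf x;\mathbf y]$: $\mathcal B_n(\mathbf z)=[\nabla_{\mathbf x}f_n(\mathbf x,\mathbf y);-\nabla_{\mathbf y}f_n(\mathbf x,\mathbf y)]$ and $\mathcal R_n(\mathbf z)=N_{\mathcal X}(\mathbf x)\times N_{\mathcal Y}(\mathbf y)$ (product of normal cones, i.e. the subdifferential of the indicator function of $\mathcal Z$). For $\mathbf z=[\mathbf z_1;\dots;\mathbf z_N]\in\mathbb{R}^{Nd}$ let $\mathcal B(\mathbf z)=[\mathcal B_1(\mathbf z_1);\dots;\mathcal B_N(\mathbf z_N)]$ and $\mathcal R(\mathbf z)=\mathcal R_1(\mathbf z_1)\times\dots\times\mathcal R_N(\mathbf z_N)$. Let $\mathbf W\in\mathbb{R}^{N\times N}$ satisfy $\mathbf W=\mathbf W^\top$, $\mathbf W\mathbf 1_N=\mathbf 1_N$, $\mathrm{null}(\mathbf I-\mathbf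 W)=\mathrm{span}\{\mathbf 1_N\}$, and $\mathbf 0\prec\mathbf W\preceq\mathbf I_N$; let $\hat{\mathbf W}=\mathbf W\otimes\mathbf I_d$ and $\mathbf U=(\mathbf I_{Nd}-\hat{\mathbf W})^{1/2}$. For $\alpha>0$ and $\mathbf v=[\mathbf z;\mathbf q]\in\mathbb{R}^{2Nd}$ define the (set-valued) operator $\mathcal T(\mathbf v)=\{[\alpha\mathbf g+\mathbf U\mathbf q;\,-\mathbf U\mathbf z]:\mathbf g\in\mathcal B(\mathbf z)+\mathcal R(\mathbf z)\}$ and the matrix $\mathbf D=\begin{bmatrix}\mathbf I&\mathbf U\\ \mathbf U&\mathbf I\end{bmatrix}$. Then: (i) the operator $\mathcal B+\mathcal R$ is $\rho$-weakly monotone; (ii) if $\alpha<\rho^{-1}$, then the operator $(\mathbf I+\alpha(\mathcal B+\mathcal R))^{-1}$ is well-defined; (iii) if $\alpha\le \bigl(1-(1-\lambda_{\min}(\mathbf W))^{1/2}\bigr)/(2\rho)$, then the operator $\mathbf D+\mathcal T$ is $(\lambda_{\min}(\mathbf W)/4)$-strongly monotone.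
   Context: A function $\phi$ is $\rho$-weakly convex on a set $S$ if $\phi(\hat{\mathbf x})\ge\phi(\mathbf x)+\langle\nabla\phi(\mathbf x),\hat{\mathbf x}-\mathbf x\rangle-\frac{\rho}{2}\|\hat{\mathbf x}-\mathbf x\|^2$ for all $\mathbf x,\hat{\mathbf x}\in S$; $\phi$ is $\rho$-weakly concave if $-\phi$ is $\rho$-weakly convex. A (possibly set-valued) operator $F$ is $\rho$-weakly monotone if $\langle \mathbf g-\hat{\mathbf g},\mathbf z-\hat{\mathbf z}\rangle\ge-\rho\|\mathbf z-\hat{\mathbf z}\|^2$ for all $\mathbf z,\hat{\mathbf z}$ and all $\mathbf g\in F(\mathbf z)$, $\hat{\mathbf g}\in F(\hat{\mathbf z})$; it is $\mu$-strongly monotone if instead $\langle \mathbf g-\hat{\mathbf g},\mathbf z-\hat{\mathbf z}\rangle\ge\mu\|\mathbf z-\hat{\mathbf z}\|^2$. An inverse operator $\mathcal G^{-1}$ is called well-defined if for every $\mathbf z$ the problem of finding $\mathbf u$ with $\mathbf z\in\mathcal G(\mathbf u)$ has a unique solution. $\lambda_{\min}$ denotes the smallest eigenvalue; $\otimes$ the Kronecker product. *)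

theory Defs
  imports "HOL-Analysis.Analysis"
begin

text \<open>Stacked vectors in R^{Nd} are modelled as ((real^'p) \<times> (real^'q))^'n:
  node index 'n (N = CARD('n)), local variable z_n = (x_n, y_n).\<close>

type_synonym ('p,'q,'n) stack = "((real^'p::finite) \<times> (real^'q::finite))^'n::finite"

definition normal_cone :: "'a::real_inner set \<Rightarrow> 'a \<Rightarrow> 'a set" where
  "normal_cone S x = (if x \<in> S then {g. \<forall>x'\<in>S. g \<bullet> (x' - x) \<le> 0} else {})"

definition grad_x :: "((real^'p) \<times> (real^'q) \<Rightarrow> real) \<Rightarrow> real^'p \<Rightarrow> real^'q \<Rightarrow> real^'p" where
  "grad_x f x y = (\<Sum>i\<in>Basis. frechet_derivative f (at (x,y)) (i, 0) *\<^sub>R i)"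

definition grad_y :: "((real^'p) \<times> (real^'q) \<Rightarrow> real) \<Rightarrow> real^'p \<Rightarrow> real^'q \<Rightarrow> real^'q" where
  "grad_y f x y = (\<Sum>i\<in>Basis. frechet_derivative f (at (x,y)) (0, i) *\<^sub>R i)"

definition weakly_convex_on :: "real \<Rightarrow> 'a::euclidean_space set \<Rightarrow> ('a \<Rightarrow> real) \<Rightarrow> ('a \<Rightarrow> 'a) \<Rightarrow> bool" where
  "weakly_convex_on \<rho> S \<phi> g \<longleftrightarrow>
     (\<forall>x\<in>S. \<forall>x'\<in>S. \<phi> x' \<ge> \<phi> x + g x \<bullet> (x' - x) - \<rho> / 2 * (norm (x' - x))\<^sup>2)"

definition Bn :: "((real^'p) \<times> (real^'q) \<Rightarrow> real) \<Rightarrow> (real^'p) \<times> (real^'q) \<Rightarrow> (real^'p) \<times> (real^'q)" where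
  "Bn f z = (grad_x f (fst z) (snd z), - grad_y f (fst z) (snd z))"

definition Rn :: "(real^'p) set \<Rightarrow> (real^'q) set \<Rightarrow> (real^'p) \<times> (real^'q) \<Rightarrow> ((real^'p) \<times> (real^'q)) set" where
  "Rn X Y z = normal_cone X (fst z) \<times> normal_cone Y (snd z)"

definition BR :: "('n \<Rightarrow> (real^'p) \<times> (real^'q) \<Rightarrow> real) \<Rightarrow> (real^'p) set \<Rightarrow> (real^'q) set
    \<Rightarrow> ('p::finite,'q::finite,'n::finite) stack \<Rightarrow> ('p,'q,'n) stack set" where
  "BR f X Y z = {g. \<forall>n. g $ n - Bn (f n) (z $ n) \<in> Rn X Y (z $ n)}"

definition weakly_monotone :: "real \<Rightarrow> ('a::real_inner \<Rightarrow> 'a set) \<Rightarrow> bool" where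
  "weakly_monotone \<rho> F \<longleftrightarrow>
     (\<forall>z z' g g'. g \<in> F z \<longrightarrow> g' \<in> F z' \<longrightarrow> (g - g') \<bullet> (z - z') \<ge> - \<rho> * (norm (z - z'))\<^sup>2)"

definition strongly_monotone :: "real \<Rightarrow> ('a::real_inner \<Rightarrow> 'a set) \<Rightarrow> bool" where
  "strongly_monotone \<mu> F \<longleftrightarrow>
     (\<forall>z z' g g'. g \<in> F z \<longrightarrow> g' \<in> F z' \<longrightarrow> (g - g') \<bullet> (z - z') \<ge> \<mu> * (norm (z - z'))\<^sup>2)"

definition inverse_well_defined :: "('a \<Rightarrow> 'b set) \<Rightarrow> bool" where
  "inverse_well_defined G \<longleftrightarrow> (\<forall>z. \<exists>!u. z \<in> G u)"

definition lambda_min :: "real^'n^'n \<Rightarrow> real" where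
  "lambda_min W = Min {l. \<exists>v. v \<noteq> 0 \<and> W *v v = l *\<^sub>R v}"

text \<open>Kronecker product W \<otimes> I_d acting on stacked vectors.\<close>
definition kron_I :: "real^'n^'n \<Rightarrow> ('p::finite,'q::finite,'n::finite) stack \<Rightarrow> ('p,'q,'n) stack" where
  "kron_I W z = (\<chi> n. \<Sum>m\<in>UNIV. W $ n $ m *\<^sub>R z $ m)"

definition psd_sqrt :: "('a::real_inner \<Rightarrow> 'a) \<Rightarrow> ('a \<Rightarrow> 'a)" where
  "psd_sqrt L = (THE S. linear S \<and> (\<forall>x y. S x \<bullet> y = x \<bullet> S y) \<and> (\<forall>x. 0 \<le> S x \<bullet> x)
                    \<and> (\<forall>x. S (S x) = L x))"

definition Uop :: "real^'n^'n \<Rightarrow> ('p::finite,'q::finite,'n::finite) stack \<Rightarrow> ('p,'q,'n) stack" where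
  "Uop W = psd_sqrt (\<lambda>z. z - kron_I W z)"

definition DT :: "('n \<Rightarrow> (real^'p) \<times> (real^'q) \<Rightarrow> real) \<Rightarrow> (real^'p) set \<Rightarrow> (real^'q) set
    \<Rightarrow> real^'n^'n \<Rightarrow> real \<Rightarrow> ('p::finite,'q::finite,'n::finite) stack \<times> ('p,'q,'n) stack
    \<Rightarrow> (('p,'q,'n) stack \<times> ('p,'q,'n) stack) set" where
  "DT f X Y W \<alpha> v =
     (let z = fst v; q = snd v; U = Uop W in
       {(z + U q, U z + q) + (\<alpha> *\<^sub>R g + U q, - U z) | g. g \<in> BR f X Y z})"

end

theory Submission
  imports Defs
begin

text \<open>
  (i) Adding the four weak convexity/concavity inequalities of \<open>f\<^sub>n\<close> at two points shows
  that each \<open>B\<^sub>n\<close> is \<open>\<rho>\<close>-weakly monotone on \<open>X \<times> Y\<close>; normal cones are monotone.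

  (ii) Uniqueness of the resolvent is immediate from (i) when \<open>\<alpha>\<rho> < 1\<close>. For existence,
  the resolvent inclusion at node \<open>n\<close> with data \<open>c = (c\<^sub>x, c\<^sub>y)\<close> is the first-order
  optimality condition at a saddle point on \<open>X \<times> Y\<close> of
  \<open>f\<^sub>n(x, y) + \<parallel>x - c\<^sub>x\<parallel>\<^sup>2/(2\<alpha>) - \<parallel>y - c\<^sub>y\<parallel>\<^sup>2/(2\<alpha>)\<close>, which is strongly convex
  in \<open>x\<close> and strongly concave in \<open>y\<close> with modulus \<open>1/\<alpha> - \<rho>\<close>. Strong convexity makes the
  partial argmin and argmax maps continuous, so Brouwer's theorem yields a fixed point of
  \<open>(x, y) \<mapsto> (argmin, argmax)\<close>, i.e. a saddle point.

  (iii) \<open>I - W \<otimes> I\<close> is positive semidefinite, so by the spectral theorem \<open>U\<close> is well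
  defined, and \<open>\<parallel>U\<parallel> \<le> s = sqrt (1 - \<lambda>\<^sub>m\<^sub>i\<^sub>n)\<close>. With \<open>A\<close>, \<open>B\<close> the norms of the
  \<open>z\<close>- and \<open>q\<close>-differences, the monotonicity pairing of \<open>D + T\<close> is at least
  \<open>(1 - \<alpha>\<rho>) A\<^sup>2 + B\<^sup>2 - 2 s A B\<close>, and the step size condition \<open>\<alpha>\<rho> \<le> (1 - s)/2\<close> makes
  this at least \<open>(1 - s\<^sup>2)/4 (A\<^sup>2 + B\<^sup>2) = \<lambda>\<^sub>m\<^sub>i\<^sub>n/4 \<parallel>v - v'\<parallel>\<^sup>2\<close>.
\<close>

section \<open>Spectral theorem and positive semidefinite square roots\<close>

lemma quadratic_nonneg_imp_linear_coeff_zero: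
  fixes c d :: real
  assumes "\<And>t. 0 \<le> 2 * t * c + t\<^sup>2 * d"
  shows "c = 0"
proof (rule ccontr)
  assume "c \<noteq> 0"
  define k where "k = \<bar>d\<bar> + 1"
  have k: "k \<ge> 1" "d \<le> k - 1" by (auto simp: k_def)
  have "0 \<le> (2 * (- c / k) * c + (- c / k)\<^sup>2 * d) * k\<^sup>2"
    using assms[of "- c / k"] by simp
  also have "\<dots> = c\<^sup>2 * (d - 2 * k)"
    using k by (simp add: field_simps power2_eq_square)
  finally show False
    using \<open>c \<noteq> 0\<close> k by (simp add: zero_le_mult_iff)
qed

lemma self_adjoint_rayleigh_min_eigenvector:
  fixes A :: "'a::real_inner \<Rightarrow> 'a"
  assumes lin: "linear A" and sym: "\<And>x y. A x \<bullet> y = x \<bullet> A y"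
    and V: "subspace V" and inv: "A ` V \<subseteq> V"
    and x0: "x0 \<in> V" "x0 \<bullet> x0 = 1"
    and min: "\<And>u. u \<in> V \<Longrightarrow> (x0 \<bullet> A x0) * (u \<bullet> u) \<le> u \<bullet> A u"
  shows "A x0 = (x0 \<bullet> A x0) *\<^sub>R x0"
proof -
  define l where "l = x0 \<bullet> A x0"
  define w where "w = A x0 - l *\<^sub>R x0"
  have wV: "w \<in> V"
    using inv x0 V by (auto simp: w_def subspace_diff subspace_scale)
  have wx0: "w \<bullet> x0 = 0"
    using x0(2) inner_commute[of "A x0" x0] by (simp add: w_def l_def inner_diff_left)
  have "A x0 \<bullet> w = 0"
  proof (rule quadratic_nonneg_imp_linear_coeff_zero[where d = "w \<bullet> A w - l * (w \<bullet> w)"])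
    fix t :: real
    have "x0 + t *\<^sub>R w \<in> V"
      using wV x0 V by (simp add: subspace_add subspace_scale)
    hence "l * ((x0 + t *\<^sub>R w) \<bullet> (x0 + t *\<^sub>R w)) \<le> (x0 + t *\<^sub>R w) \<bullet> A (x0 + t *\<^sub>R w)"
      unfolding l_def by (rule min)
    moreover have "(x0 + t *\<^sub>R w) \<bullet> (x0 + t *\<^sub>R w) = 1 + t\<^sup>2 * (w \<bullet> w)"
      using x0(2) wx0 by (simp add: inner_add_left inner_add_right inner_commute power2_eq_square)
    moreover have "(x0 + t *\<^sub>R w) \<bullet> A (x0 + t *\<^sub>R w) = l + 2 * t * (A x0 \<bullet> w) + t\<^sup>2 * (w \<bullet> A w)"
      using linear_add[OF lin] linear_scale[OF lin] sym[of x0 w] inner_commute[of w "A x0"]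
      by (simp add: l_def inner_add_left inner_add_right power2_eq_square algebra_simps)
    ultimately have "l * (1 + t\<^sup>2 * (w \<bullet> w)) \<le> l + 2 * t * (A x0 \<bullet> w) + t\<^sup>2 * (w \<bullet> A w)"
      by (simp only:)
    thus "0 \<le> 2 * t * (A x0 \<bullet> w) + t\<^sup>2 * (w \<bullet> A w - l * (w \<bullet> w))"
      by (simp add: algebra_simps)
  qed
  hence "w \<bullet> w = 0"
    using wx0 by (simp add: w_def inner_diff_left inner_commute)
  thus ?thesis by (simp add: w_def l_def)
qed

lemma self_adjoint_unit_eigenvector:
  fixes A :: "'a::euclidean_space \<Rightarrow> 'a"
  assumes lin: "linear A" and sym: "\<And>x y. A x \<bullet> y = x \<bullet> A y"
    and V: "subspace V" and inv: "A ` V \<subseteq> V" and nontriv: "V \<noteq> {0}"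
  obtains x0 where "x0 \<in> V" "norm x0 = 1" "A x0 = (x0 \<bullet> A x0) *\<^sub>R x0"
proof -
  define S where "S = V \<inter> sphere 0 1"
  have normalize: "u /\<^sub>R norm u \<in> S" if "u \<in> V" "u \<noteq> 0" for u
    using that V by (simp add: S_def subspace_scale)
  obtain v where "v \<in> V" "v \<noteq> 0"
    using nontriv V subspace_0 by blast
  hence "S \<noteq> {}" using normalize by blast
  moreover have "compact S"
    unfolding S_def using V by (simp add: closed_subspace closed_Int_compact)
  moreover have "continuous_on S (\<lambda>x. x \<bullet> A x)"
    using lin by (intro continuous_intros linear_continuous_on) (simp add: linear_conv_bounded_linear)
  ultimately obtain x0 where x0S: "x0 \<in> S" and x0min: "\<And>x. x \<in> S \<Longrightarrow> x0 \<bullet> A x0 \<le> x \<bullet> A x"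
    by (metis continuous_attains_inf)
  have x0: "x0 \<in> V" "norm x0 = 1" using x0S by (auto simp: S_def)
  have "(x0 \<bullet> A x0) * (u \<bullet> u) \<le> u \<bullet> A u" if "u \<in> V" for u
  proof (cases "u = 0")
    case True then show ?thesis using linear_0[OF lin] by simp
  next
    case False
    have "x0 \<bullet> A x0 \<le> (u /\<^sub>R norm u) \<bullet> A (u /\<^sub>R norm u)"
      using x0min normalize[OF that False] by blast
    also have "\<dots> = (u \<bullet> A u) / (u \<bullet> u)"
      using linear_scale[OF lin] by (simp add: dot_square_norm power2_eq_square field_simps)
    finally show ?thesis using False by (simp add: pos_le_divide_eq)
  qed
  hence "A x0 = (x0 \<bullet> A x0) *\<^sub>R x0"
    using self_adjoint_rayleigh_min_eigenvector[OF lin sym V inv x0(1)] x0(2)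
    by (simp add: norm_eq_1)
  with x0 show ?thesis using that by blast
qed

lemma span_insert_orthogonal_complement:
  assumes V: "subspace V" and x0: "x0 \<in> V" "x0 \<bullet> x0 = 1"
    and B: "span B = {y \<in> V. y \<bullet> x0 = 0}"
  shows "span (insert x0 B) = V"
proof
  have "B \<subseteq> V" using B span_superset by blast
  thus "span (insert x0 B) \<subseteq> V" using V x0(1) by (simp add: span_minimal)
  show "V \<subseteq> span (insert x0 B)"
  proof
    fix u assume "u \<in> V"
    hence "u - (u \<bullet> x0) *\<^sub>R x0 \<in> span B"
      using B V x0 by (simp add: subspace_diff subspace_scale inner_diff_left)
    thus "u \<in> span (insert x0 B)" using span_breakdown_eq by blast
  qed
qed

lemma self_adjoint_orthonormal_eigenbasis_subspace:
  fixes A :: "'a::euclidean_space \<Rightarrow> 'a"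
  assumes lin: "linear A" and sym: "\<And>x y. A x \<bullet> y = x \<bullet> A y"
    and "subspace V" and "A ` V \<subseteq> V"
  shows "\<exists>B. B \<subseteq> V \<and> (\<forall>b\<in>B. norm b = 1) \<and> pairwise orthogonal B \<and> span B = V
     \<and> (\<forall>b\<in>B. A b = (b \<bullet> A b) *\<^sub>R b)"
  using assms(3,4)
proof (induction "dim V" arbitrary: V rule: less_induct)
  case less
  show ?case
  proof (cases "V = {0}")
    case True then show ?thesis by (intro exI[of _ "{}"]) auto
  next
    case False
    obtain x0 where x0: "x0 \<in> V" "norm x0 = 1" "A x0 = (x0 \<bullet> A x0) *\<^sub>R x0"
      using self_adjoint_unit_eigenvector[OF lin sym less.prems False] by blast
    have x0x0: "x0 \<bullet> x0 = 1" using x0(2) by (simp add: norm_eq_1)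
    define V' where "V' = {y \<in> V. y \<bullet> x0 = 0}"
    have V': "subspace V'"
      using less.prems(1) by (auto simp: V'_def subspace_def inner_add_left)
    have "A y \<bullet> x0 = (x0 \<bullet> A x0) * (y \<bullet> x0)" for y
      using x0(3) sym[of y x0] by (metis inner_scaleR_right)
    hence AV': "A ` V' \<subseteq> V'" using less.prems(2) by (auto simp: V'_def)
    have "V' \<subset> V" using x0(1) x0x0 unfolding V'_def by force
    hence "dim V' < dim V"
      using V' less.prems(1) by (metis dim_psubset span_eq_iff)
    then obtain B' where B': "B' \<subseteq> V'" "\<forall>b\<in>B'. norm b = 1" "pairwise orthogonal B'"
       "span B' = V'" "\<forall>b\<in>B'. A b = (b \<bullet> A b) *\<^sub>R b"
      using less.hyps[OF _ V' AV'] by blast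
    show ?thesis
    proof (intro exI[of _ "insert x0 B'"] conjI)
      show "insert x0 B' \<subseteq> V" using B'(1) x0(1) by (auto simp: V'_def)
      show "\<forall>b\<in>insert x0 B'. norm b = 1" using B'(2) x0(2) by simp
      show "pairwise orthogonal (insert x0 B')"
        using B'(1,3) by (auto simp: pairwise_insert V'_def orthogonal_def inner_commute)
      show "span (insert x0 B') = V"
        using span_insert_orthogonal_complement less.prems(1) x0(1) x0x0 B'(4) V'_def by blast
      show "\<forall>b\<in>insert x0 B'. A b = (b \<bullet> A b) *\<^sub>R b" using B'(5) x0(3) by simp
    qed
  qed
qed

corollary self_adjoint_orthonormal_eigenbasis:
  fixes A :: "'a::euclidean_space \<Rightarrow> 'a"
  assumes "linear A" and "\<And>x y. A x \<bullet> y = x \<bullet> A y"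
  obtains B where "\<forall>b\<in>B. norm b = 1" "pairwise orthogonal B" "span B = UNIV"
     "\<forall>b\<in>B. A b = (b \<bullet> A b) *\<^sub>R b"
  using self_adjoint_orthonormal_eigenbasis_subspace[OF assms, of UNIV] by auto

lemma orthonormal_sum_inner:
  fixes B :: "'a::euclidean_space set"
  assumes "\<forall>b\<in>B. norm b = 1" "pairwise orthogonal B" "c \<in> B"
  shows "(\<Sum>b\<in>B. f b *\<^sub>R b) \<bullet> c = f c"
proof -
  have "finite B" using assms(2) by (rule pairwise_orthogonal_imp_finite)
  have "(\<Sum>b\<in>B. f b *\<^sub>R b) \<bullet> c = (\<Sum>b\<in>B. f b * (b \<bullet> c))" by (simp add: inner_sum_left)
  also have "\<dots> = (\<Sum>b\<in>B. if b = c then f c else 0)"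
    using assms by (intro sum.cong) (auto simp: pairwise_def orthogonal_def norm_eq_1)
  finally show ?thesis using \<open>finite B\<close> assms(3) by simp
qed

lemma orthonormal_basis_inner:
  fixes B :: "'a::euclidean_space set"
  assumes "\<forall>b\<in>B. norm b = 1" "pairwise orthogonal B" "span B = UNIV"
  shows "x \<bullet> y = (\<Sum>b\<in>B. (x \<bullet> b) * (y \<bullet> b))"
proof -
  have "(\<Sum>b\<in>B. (x \<bullet> b) *\<^sub>R b) = x"
    using assms by (simp add: orthonormal_basis_expand pairwise_orthogonal_imp_finite)
  hence "x \<bullet> y = (\<Sum>b\<in>B. (x \<bullet> b) *\<^sub>R b) \<bullet> y" by (simp only:)
  also have "\<dots> = (\<Sum>b\<in>B. (x \<bullet> b) * (b \<bullet> y))" by (simp add: inner_sum_left)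
  also have "\<dots> = (\<Sum>b\<in>B. (x \<bullet> b) * (y \<bullet> b))" by (simp add: inner_commute)
  finally show ?thesis .
qed

lemma psd_square_root_on_eigenvector:
  fixes T :: "'a::real_inner \<Rightarrow> 'a"
  assumes lin: "linear T" and sym: "\<And>x y. T x \<bullet> y = x \<bullet> T y" and psd: "\<And>x. 0 \<le> T x \<bullet> x"
    and eig: "T (T b) = \<mu> *\<^sub>R b" and "0 \<le> \<mu>"
  shows "T b = sqrt \<mu> *\<^sub>R b"
proof -
  define m where "m = sqrt \<mu>"
  have TTb: "T (T b) = (m * m) *\<^sub>R b" using eig \<open>0 \<le> \<mu>\<close> by (simp add: m_def)
  show ?thesis
  proof (cases "m = 0")
    case True
    have "T b \<bullet> T b = T (T b) \<bullet> b" by (simp add: sym)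
    also have "\<dots> = 0" using TTb True by simp
    finally show ?thesis using True by (simp add: m_def)
  next
    case False
    define u where "u = T b - m *\<^sub>R b"
    have "T u = - m *\<^sub>R u"
      using TTb by (simp add: u_def linear_diff[OF lin] linear_scale[OF lin] algebra_simps)
    hence "0 \<le> - m * (u \<bullet> u)" using psd[of u] by simp
    moreover have "m > 0" using False \<open>0 \<le> \<mu>\<close> by (simp add: m_def)
    ultimately have "u \<bullet> u \<le> 0" by (simp add: mult_le_0_iff)
    hence "u = 0" by (metis inner_ge_zero inner_eq_zero_iff order_antisym)
    thus ?thesis by (simp add: u_def m_def)
  qed
qed

lemma psd_square_root_eigenbasis_expansion:
  fixes L T :: "'a::euclidean_space \<Rightarrow> 'a"
  assumes B: "\<forall>b\<in>B. norm b = 1" "pairwise orthogonal B" "span B = UNIV"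
     "\<forall>b\<in>B. L b = (b \<bullet> L b) *\<^sub>R b"
    and psdL: "\<And>x. 0 \<le> L x \<bullet> x"
    and lin: "linear T" and sym: "\<And>x y. T x \<bullet> y = x \<bullet> T y" and psd: "\<And>x. 0 \<le> T x \<bullet> x"
    and sq: "\<And>x. T (T x) = L x"
  shows "T x = (\<Sum>b\<in>B. (sqrt (b \<bullet> L b) * (x \<bullet> b)) *\<^sub>R b)"
proof -
  have "T b = sqrt (b \<bullet> L b) *\<^sub>R b" if "b \<in> B" for b
    using psd_square_root_on_eigenvector[OF lin sym psd] psdL[of b] sq[of b] B(4) that
    by (simp add: inner_commute)
  moreover have "x = (\<Sum>b\<in>B. (x \<bullet> b) *\<^sub>R b)"
    using B by (simp add: orthonormal_basis_expand pairwise_orthogonal_imp_finite)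
  hence "T x = (\<Sum>b\<in>B. (x \<bullet> b) *\<^sub>R T b)"
    by (metis (no_types, lifting) lin linear_scale linear_sum sum.cong)
  ultimately show ?thesis by (auto intro: sum.cong)
qed

lemma eigenbasis_psd_square_root:
  fixes L :: "'a::euclidean_space \<Rightarrow> 'a"
  assumes B: "\<forall>b\<in>B. norm b = 1" "pairwise orthogonal B" "span B = UNIV"
     "\<forall>b\<in>B. L b = (b \<bullet> L b) *\<^sub>R b"
    and lin: "linear L" and psd: "\<And>x. 0 \<le> L x \<bullet> x"
  defines "S \<equiv> \<lambda>x. \<Sum>b\<in>B. (sqrt (b \<bullet> L b) * (x \<bullet> b)) *\<^sub>R b"
  shows "linear S" and "\<And>x y. S x \<bullet> y = x \<bullet> S y" and "\<And>x. 0 \<le> S x \<bullet> x"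
    and "\<And>x. S (S x) = L x"
proof -
  define \<mu> where "\<mu> b = b \<bullet> L b" for b
  have \<mu>: "0 \<le> \<mu> b" for b using psd[of b] by (simp add: \<mu>_def inner_commute)
  have S_app: "S x = (\<Sum>b\<in>B. (sqrt (\<mu> b) * (x \<bullet> b)) *\<^sub>R b)" for x
    by (simp add: S_def \<mu>_def)
  have S_inner: "S x \<bullet> c = sqrt (\<mu> c) * (x \<bullet> c)" if "c \<in> B" for x c
    unfolding S_app by (rule orthonormal_sum_inner[OF B(1,2) that])
  show "linear S"
    unfolding S_def
    by (auto intro!: linearI simp: inner_add_left algebra_simps sum.distrib scaleR_sum_right)
  show "S x \<bullet> y = x \<bullet> S y" for x y
    unfolding S_def
    by (simp add: inner_sum_left inner_sum_right inner_commute mult.commute mult.left_commute)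
  show "0 \<le> S x \<bullet> x" for x
  proof -
    have "S x \<bullet> x = (\<Sum>b\<in>B. sqrt (\<mu> b) * (x \<bullet> b) * (b \<bullet> x))"
      by (simp add: S_app inner_sum_left)
    also have "\<dots> = (\<Sum>b\<in>B. sqrt (\<mu> b) * (x \<bullet> b)\<^sup>2)"
      by (intro sum.cong refl) (simp add: inner_commute power2_eq_square)
    finally show ?thesis by (simp add: sum_nonneg \<mu>)
  qed
  show "S (S x) = L x" for x
  proof -
    have "S (S x) = (\<Sum>b\<in>B. (x \<bullet> b) *\<^sub>R (\<mu> b *\<^sub>R b))"
      unfolding S_app[of "S x"] using S_inner \<mu> by (intro sum.cong) (auto simp: mult.assoc[symmetric])
    also have "\<dots> = L (\<Sum>b\<in>B. (x \<bullet> b) *\<^sub>R b)"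
      using B(4) by (simp add: linear_sum[OF lin] linear_scale[OF lin] \<mu>_def)
    also have "(\<Sum>b\<in>B. (x \<bullet> b) *\<^sub>R b) = x"
      using B by (simp add: orthonormal_basis_expand pairwise_orthogonal_imp_finite)
    finally show ?thesis .
  qed
qed

lemma psd_sqrt_unique:
  fixes L :: "'a::euclidean_space \<Rightarrow> 'a"
  assumes lin: "linear L" and sym: "\<And>x y. L x \<bullet> y = x \<bullet> L y" and psd: "\<And>x. 0 \<le> L x \<bullet> x"
  shows "\<exists>!S. linear S \<and> (\<forall>x y. S x \<bullet> y = x \<bullet> S y) \<and> (\<forall>x. 0 \<le> S x \<bullet> x) \<and> (\<forall>x. S (S x) = L x)"
proof -
  obtain B where B: "\<forall>b\<in>B. norm b = 1" "pairwise orthogonal B" "span B = UNIV"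
     "\<forall>b\<in>B. L b = (b \<bullet> L b) *\<^sub>R b"
    using self_adjoint_orthonormal_eigenbasis[OF lin sym] by blast
  define S where "S x = (\<Sum>b\<in>B. (sqrt (b \<bullet> L b) * (x \<bullet> b)) *\<^sub>R b)" for x
  have "T = S" if "linear T" "\<And>x y. T x \<bullet> y = x \<bullet> T y" "\<And>x. 0 \<le> T x \<bullet> x"
    "\<And>x. T (T x) = L x" for T
    using psd_square_root_eigenbasis_expansion[OF B psd that] by (simp add: fun_eq_iff S_def)
  thus ?thesis
    using eigenbasis_psd_square_root[OF B lin psd] unfolding S_def[symmetric]
    by (intro ex1I[of _ S]) blast+
qed

lemma self_adjoint_eigenvalue_in_eigenbasis:
  fixes A :: "'a::euclidean_space \<Rightarrow> 'a"
  assumes sym: "\<And>x y. A x \<bullet> y = x \<bullet> A y"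
    and B: "\<forall>b\<in>B. norm b = 1" "pairwise orthogonal B" "span B = UNIV"
      "\<forall>b\<in>B. A b = (b \<bullet> A b) *\<^sub>R b"
    and v: "v \<noteq> 0" "A v = l *\<^sub>R v"
  shows "\<exists>b\<in>B. l = b \<bullet> A b"
proof -
  have "(\<Sum>b\<in>B. (v \<bullet> b) * (v \<bullet> b)) \<noteq> 0"
    using v(1) by (simp flip: orthonormal_basis_inner[OF B(1-3)])
  then obtain b where b: "b \<in> B" "v \<bullet> b \<noteq> 0" by (metis (no_types, lifting) mult_zero_left sum.neutral)
  have "l * (v \<bullet> b) = v \<bullet> A b" using v(2) sym[of v b] by simp
  also have "\<dots> = (b \<bullet> A b) * (v \<bullet> b)" using B(4) b(1) by (metis inner_scaleR_right)
  finally show ?thesis using b by auto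
qed

section \<open>The matrix \<open>W\<close> and the operators \<open>W \<otimes> I\<close> and \<open>U\<close>\<close>

lemma symmetric_matrix_self_adjoint:
  fixes W :: "real^'n^'n"
  assumes "transpose W = W"
  shows "(W *v x) \<bullet> y = x \<bullet> (W *v y)"
  by (metis assms dot_lmul_matrix vector_transpose_matrix)

lemma lambda_min_symmetric:
  fixes W :: "real^'n^'n"
  assumes sym: "transpose W = W"
  shows lambda_min_eigenvalue: "\<exists>v. v \<noteq> 0 \<and> W *v v = lambda_min W *\<^sub>R v"
    and lambda_min_le_rayleigh: "lambda_min W * (x \<bullet> x) \<le> x \<bullet> (W *v x)"
proof -
  have symW: "\<And>x y. (W *v x) \<bullet> y = x \<bullet> (W *v y)"
    using symmetric_matrix_self_adjoint[OF sym] .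
  obtain B where B: "\<forall>b\<in>B. norm b = 1" "pairwise orthogonal B" "span B = UNIV"
      "\<forall>b\<in>B. W *v b = (b \<bullet> (W *v b)) *\<^sub>R b"
    using self_adjoint_orthonormal_eigenbasis[OF matrix_vector_mul_linear symW] by blast
  define E where "E = {l. \<exists>v. v \<noteq> 0 \<and> W *v v = l *\<^sub>R v}"
  have E_B: "E \<subseteq> (\<lambda>b. b \<bullet> (W *v b)) ` B"
    using self_adjoint_eigenvalue_in_eigenbasis[OF symW B] by (auto simp: E_def)
  have B_E: "b \<bullet> (W *v b) \<in> E" if "b \<in> B" for b
  proof -
    have "b \<noteq> 0" using B(1) that by auto
    thus ?thesis using B(4) that unfolding E_def by blast
  qed
  have "finite E"
    using E_B B(2) pairwise_orthogonal_imp_finite finite_surj by blast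
  have "(\<chi> i. 1) \<noteq> (0 :: real^'n)" by (simp add: vec_eq_iff)
  hence "B \<noteq> {}" using B(3) by auto
  hence "E \<noteq> {}" using B_E by blast
  have "lambda_min W \<in> E"
    unfolding lambda_min_def E_def[symmetric] using \<open>finite E\<close> \<open>E \<noteq> {}\<close> by (rule Min_in)
  thus "\<exists>v. v \<noteq> 0 \<and> W *v v = lambda_min W *\<^sub>R v" by (simp add: E_def)
  have min: "lambda_min W \<le> b \<bullet> (W *v b)" if "b \<in> B" for b
    unfolding lambda_min_def E_def[symmetric] using \<open>finite E\<close> B_E[OF that] by (rule Min_le)
  have "lambda_min W * (x \<bullet> x) = (\<Sum>b\<in>B. lambda_min W * ((x \<bullet> b) * (x \<bullet> b)))"
    using orthonormal_basis_inner[OF B(1-3), of x x] by (simp add: sum_distrib_left)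
  also have "\<dots> \<le> (\<Sum>b\<in>B. (b \<bullet> (W *v b)) * ((x \<bullet> b) * (x \<bullet> b)))"
    using min by (intro sum_mono mult_right_mono) simp_all
  also have "\<dots> = (\<Sum>b\<in>B. (x \<bullet> b) * ((W *v x) \<bullet> b))"
    using B(4) symW by (intro sum.cong refl) (metis inner_scaleR_right mult.commute mult.left_commute)
  also have "\<dots> = x \<bullet> (W *v x)"
    using orthonormal_basis_inner[OF B(1-3), of x "W *v x"] by simp
  finally show "lambda_min W * (x \<bullet> x) \<le> x \<bullet> (W *v x)" .
qed

lemma lambda_min_bounds:
  fixes W :: "real^'n^'n"
  assumes sym: "transpose W = W" and pd: "\<And>v. v \<noteq> 0 \<Longrightarrow> v \<bullet> (W *v v) > 0"
    and le: "\<And>v. v \<bullet> (W *v v) \<le> v \<bullet> v"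
  shows "0 < lambda_min W" and "lambda_min W \<le> 1"
proof -
  obtain v where "v \<noteq> 0" and v: "W *v v = lambda_min W *\<^sub>R v"
    using lambda_min_eigenvalue[OF sym] by blast
  have vv: "0 < v \<bullet> v" using \<open>v \<noteq> 0\<close> by simp
  have eq: "v \<bullet> (W *v v) = lambda_min W * (v \<bullet> v)" using v by simp
  show "0 < lambda_min W"
    by (rule mult_right_less_imp_less[where c = "v \<bullet> v"]) (use pd[OF \<open>v \<noteq> 0\<close>] eq vv in simp_all)
  show "lambda_min W \<le> 1"
    by (rule mult_right_le_imp_le[where c = "v \<bullet> v"]) (use le[of v] eq vv in simp_all)
qed

definition slice :: "'a::real_inner^'n \<Rightarrow> 'a \<Rightarrow> real^'n" where
  "slice z b = (\<chi> n. z $ n \<bullet> b)"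

lemma inner_eq_sum_slices:
  fixes x y :: "'a::euclidean_space^'n"
  shows "x \<bullet> y = (\<Sum>b\<in>Basis. slice x b \<bullet> slice y b)"
proof -
  have "x \<bullet> y = (\<Sum>n\<in>UNIV. \<Sum>b\<in>Basis. (x $ n \<bullet> b) * (y $ n \<bullet> b))"
    by (simp add: inner_vec_def euclidean_inner[of "x$_" "y$_"])
  also have "\<dots> = (\<Sum>b\<in>Basis. slice x b \<bullet> slice y b)"
    by (subst sum.swap) (simp add: slice_def inner_vec_def)
  finally show ?thesis .
qed

lemma inner_kron_I:
  fixes x y :: "('p::finite,'q::finite,'n::finite) stack"
  shows "x \<bullet> kron_I W y = (\<Sum>b\<in>Basis. slice x b \<bullet> (W *v slice y b))"
proof -
  have "x \<bullet> kron_I W y = (\<Sum>n\<in>UNIV. \<Sum>m\<in>UNIV. \<Sum>b\<in>Basis. W$n$m * ((x$n \<bullet> b) * (y$m \<bullet> b)))"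
    by (simp add: kron_I_def inner_vec_def inner_sum_right euclidean_inner[of "x$_" "y$_"]
        sum_distrib_left)
  also have "\<dots> = (\<Sum>b\<in>Basis. \<Sum>n\<in>UNIV. \<Sum>m\<in>UNIV. W$n$m * ((x$n \<bullet> b) * (y$m \<bullet> b)))"
    by (subst sum.swap) (simp add: sum.swap[of _ UNIV Basis])
  also have "\<dots> = (\<Sum>b\<in>Basis. slice x b \<bullet> (W *v slice y b))"
    by (simp add: slice_def inner_vec_def matrix_vector_mult_def sum_distrib_left mult.left_commute)
  finally show ?thesis .
qed

lemma linear_kron_I: "linear (kron_I W :: ('p::finite,'q::finite,'n::finite) stack \<Rightarrow> _)"
  by (rule linearI)
    (simp_all add: kron_I_def vec_eq_iff scaleR_add_right sum.distrib scaleR_sum_right mult.commute)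

lemma kron_I_self_adjoint:
  fixes x y :: "('p::finite,'q::finite,'n::finite) stack"
  assumes "transpose W = W"
  shows "kron_I W x \<bullet> y = x \<bullet> kron_I W y"
proof -
  have "kron_I W x \<bullet> y = (\<Sum>b\<in>Basis. slice y b \<bullet> (W *v slice x b))"
    by (simp add: inner_commute[of "kron_I W x"] inner_kron_I)
  also have "\<dots> = (\<Sum>b\<in>Basis. slice x b \<bullet> (W *v slice y b))"
    using symmetric_matrix_self_adjoint[OF assms] by (intro sum.cong refl) (metis inner_commute)
  finally show ?thesis by (simp add: inner_kron_I)
qed

lemma kron_I_lower_bound:
  fixes x :: "('p::finite,'q::finite,'n::finite) stack"
  assumes "\<And>v. c * (v \<bullet> v) \<le> v \<bullet> (W *v v)"
  shows "c * (x \<bullet> x) \<le> x \<bullet> kron_I W x"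
  unfolding inner_kron_I inner_eq_sum_slices[of x x] sum_distrib_left
  by (intro sum_mono assms)

lemma kron_I_upper_bound:
  fixes x :: "('p::finite,'q::finite,'n::finite) stack"
  assumes "\<And>v. v \<bullet> (W *v v) \<le> v \<bullet> v"
  shows "x \<bullet> kron_I W x \<le> x \<bullet> x"
  unfolding inner_kron_I inner_eq_sum_slices[of x x]
  by (intro sum_mono assms)

lemma Uop_square_root:
  fixes W :: "real^'n^'n"
  assumes sym: "transpose W = W" and le: "\<And>v. v \<bullet> (W *v v) \<le> v \<bullet> v"
  shows "linear (Uop W :: ('p::finite,'q::finite,'n::finite) stack \<Rightarrow> _)"
    and "\<And>x y :: ('p,'q,'n) stack. Uop W x \<bullet> y = x \<bullet> Uop W y"
    and "\<And>x :: ('p,'q,'n) stack. Uop W (Uop W x) = x - kron_I W x"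
proof -
  define L where "L = (\<lambda>z :: ('p,'q,'n) stack. z - kron_I W z)"
  have "linear L"
    unfolding L_def by (intro linear_compose_sub linear_ident linear_kron_I)
  moreover have "L x \<bullet> y = x \<bullet> L y" for x y
    using kron_I_self_adjoint[OF sym, of x y] by (simp add: L_def inner_diff_left inner_diff_right)
  moreover have "0 \<le> L x \<bullet> x" for x
    using kron_I_upper_bound[OF le, of x] kron_I_self_adjoint[OF sym, of x x]
    by (simp add: L_def inner_diff_left)
  ultimately have "linear (psd_sqrt L) \<and> (\<forall>x y. psd_sqrt L x \<bullet> y = x \<bullet> psd_sqrt L y)
      \<and> (\<forall>x. 0 \<le> psd_sqrt L x \<bullet> x) \<and> (\<forall>x. psd_sqrt L (psd_sqrt L x) = L x)"
    unfolding psd_sqrt_def by (rule theI'[OF psd_sqrt_unique])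
  thus "linear (Uop W :: ('p,'q,'n) stack \<Rightarrow> _)"
    "\<And>x y :: ('p,'q,'n) stack. Uop W x \<bullet> y = x \<bullet> Uop W y"
    "\<And>x :: ('p,'q,'n) stack. Uop W (Uop W x) = x - kron_I W x"
    by (simp_all add: Uop_def L_def)
qed

lemma norm_Uop_le:
  fixes W :: "real^'n^'n"
  assumes sym: "transpose W = W" and le: "\<And>v. v \<bullet> (W *v v) \<le> v \<bullet> v"
  shows "norm (Uop W y :: ('p::finite,'q::finite,'n::finite) stack) \<le> sqrt (1 - lambda_min W) * norm y"
proof -
  have "(norm (Uop W y))\<^sup>2 = y \<bullet> Uop W (Uop W y)"
    using Uop_square_root(2)[OF sym le, of y "Uop W y"] by (simp add: power2_norm_eq_inner)
  also have "\<dots> = y \<bullet> y - y \<bullet> kron_I W y"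
    by (simp add: Uop_square_root(3)[OF sym le] inner_diff_right)
  also have "\<dots> \<le> (1 - lambda_min W) * (norm y)\<^sup>2"
    using kron_I_lower_bound[OF lambda_min_le_rayleigh[OF sym], of y]
    by (simp add: power2_norm_eq_inner algebra_simps)
  finally have "norm (Uop W y) \<le> sqrt ((1 - lambda_min W) * (norm y)\<^sup>2)"
    using real_le_rsqrt by blast
  thus ?thesis by (simp add: real_sqrt_mult)
qed

section \<open>Weak monotonicity of \<open>B + R\<close>\<close>

lemma normal_coneD:
  assumes "g \<in> normal_cone S x"
  shows "x \<in> S" and "\<And>x'. x' \<in> S \<Longrightarrow> g \<bullet> (x' - x) \<le> 0"
  using assms by (auto simp: normal_cone_def split: if_splits)

lemma normal_cone_monotone:
  assumes "g \<in> normal_cone S x" and "g' \<in> normal_cone S x'"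
  shows "0 \<le> (g - g') \<bullet> (x - x')"
proof -
  have "g \<bullet> (x' - x) \<le> 0" and "g' \<bullet> (x - x') \<le> 0"
    using normal_coneD[OF assms(1)] normal_coneD[OF assms(2)] by auto
  thus ?thesis by (simp add: inner_diff_left inner_diff_right)
qed

lemma Bn_weakly_monotone:
  assumes wcvx: "\<And>y. y \<in> Y \<Longrightarrow> weakly_convex_on \<rho> X (\<lambda>x. f (x, y)) (\<lambda>x. grad_x f x y)"
    and wccv: "\<And>x. x \<in> X \<Longrightarrow> weakly_convex_on \<rho> Y (\<lambda>y. - f (x, y)) (\<lambda>y. - grad_y f x y)"
    and "x \<in> X" "x' \<in> X" "y \<in> Y" "y' \<in> Y"
  shows "(Bn f (x, y) - Bn f (x', y')) \<bullet> ((x, y) - (x', y')) \<ge> - \<rho> * (norm ((x, y) - (x', y')))\<^sup>2"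
proof -
  have "f (x', y) \<ge> f (x, y) + grad_x f x y \<bullet> (x' - x) - \<rho> / 2 * (norm (x' - x))\<^sup>2"
    and "f (x, y') \<ge> f (x', y') + grad_x f x' y' \<bullet> (x - x') - \<rho> / 2 * (norm (x - x'))\<^sup>2"
    and "- f (x, y') \<ge> - f (x, y) - grad_y f x y \<bullet> (y' - y) - \<rho> / 2 * (norm (y' - y))\<^sup>2"
    and "- f (x', y) \<ge> - f (x', y') - grad_y f x' y' \<bullet> (y - y') - \<rho> / 2 * (norm (y - y'))\<^sup>2"
    using wcvx[of y] wcvx[of y'] wccv[of x] wccv[of x'] assms(3-6)
    by (auto simp: weakly_convex_on_def)
  hence "(grad_x f x y - grad_x f x' y') \<bullet> (x - x') - (grad_y f x y - grad_y f x' y') \<bullet> (y - y')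
      \<ge> - \<rho> * ((norm (x - x'))\<^sup>2 + (norm (y - y'))\<^sup>2)"
    by (simp add: norm_minus_commute algebra_simps)
  thus ?thesis by (simp add: Bn_def norm_Pair inner_diff_left)
qed

lemma node_weakly_monotone:
  assumes wcvx: "\<And>y. y \<in> Y \<Longrightarrow> weakly_convex_on \<rho> X (\<lambda>x. f (x, y)) (\<lambda>x. grad_x f x y)"
    and wccv: "\<And>x. x \<in> X \<Longrightarrow> weakly_convex_on \<rho> Y (\<lambda>y. - f (x, y)) (\<lambda>y. - grad_y f x y)"
    and h: "h - Bn f u \<in> Rn X Y u" and h': "h' - Bn f u' \<in> Rn X Y u'"
  shows "(h - h') \<bullet> (u - u') \<ge> - \<rho> * (norm (u - u'))\<^sup>2"
proof -
  obtain x y x' y' where u: "u = (x, y)" and u': "u' = (x', y')" by (cases u, cases u')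
  define r r' where "r = h - Bn f u" and "r' = h' - Bn f u'"
  have cones: "fst r \<in> normal_cone X x" "snd r \<in> normal_cone Y y"
      "fst r' \<in> normal_cone X x'" "snd r' \<in> normal_cone Y y'"
    using h h' by (auto simp: r_def r'_def Rn_def u u' mem_Times_iff)
  hence "0 \<le> (r - r') \<bullet> (u - u')"
    by (simp add: u u' inner_prod_def normal_cone_monotone)
  moreover have "(Bn f u - Bn f u') \<bullet> (u - u') \<ge> - \<rho> * (norm (u - u'))\<^sup>2"
    unfolding u u' by (rule Bn_weakly_monotone[OF wcvx wccv]) (use cones normal_coneD in blast)+
  moreover have "h - h' = (Bn f u - Bn f u') + (r - r')" by (simp add: r_def r'_def)
  ultimately show ?thesis by (simp add: inner_add_left)
qed

lemma BR_weakly_monotone: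
  fixes f :: "'n::finite \<Rightarrow> (real^'p::finite) \<times> (real^'q::finite) \<Rightarrow> real"
  assumes wcvx: "\<And>n y. y \<in> Y \<Longrightarrow> weakly_convex_on \<rho> X (\<lambda>x. f n (x, y)) (\<lambda>x. grad_x (f n) x y)"
    and wccv: "\<And>n x. x \<in> X \<Longrightarrow> weakly_convex_on \<rho> Y (\<lambda>y. - f n (x, y)) (\<lambda>y. - grad_y (f n) x y)"
  shows "weakly_monotone \<rho> (BR f X Y)"
  unfolding weakly_monotone_def
proof (intro allI impI)
  fix z z' g g' :: "('p, 'q, 'n) stack"
  assume "g \<in> BR f X Y z" and "g' \<in> BR f X Y z'"
  hence "(\<Sum>n\<in>UNIV. - \<rho> * (norm (z$n - z'$n))\<^sup>2) \<le> (\<Sum>n\<in>UNIV. (g$n - g'$n) \<bullet> (z$n - z'$n))"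
    by (intro sum_mono node_weakly_monotone[OF wcvx wccv]) (auto simp: BR_def)
  thus "(g - g') \<bullet> (z - z') \<ge> - \<rho> * (norm (z - z'))\<^sup>2"
    by (simp add: power2_norm_eq_inner inner_vec_def sum_distrib_left)
qed

section \<open>Saddle points of strongly convex-concave functions\<close>

lemma weakly_convex_on_add_sq_dist:
  fixes \<phi> :: "'a::euclidean_space \<Rightarrow> real"
  assumes "weakly_convex_on \<rho> S \<phi> g" and "x \<in> S" and "x' \<in> S"
  shows "\<phi> x' + a * (norm (x' - c))\<^sup>2 \<ge> \<phi> x + a * (norm (x - c))\<^sup>2
           + (g x + (2 * a) *\<^sub>R (x - c)) \<bullet> (x' - x) + (2 * a - \<rho>) / 2 * (norm (x' - x))\<^sup>2"
proof -
  have "\<phi> x' \<ge> \<phi> x + g x \<bullet> (x' - x) - \<rho> / 2 * (norm (x' - x))\<^sup>2"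
    using assms unfolding weakly_convex_on_def by blast
  moreover have "(norm (x' - c))\<^sup>2 = (norm (x - c))\<^sup>2 + 2 * ((x - c) \<bullet> (x' - x)) + (norm (x' - x))\<^sup>2"
    by (simp add: power2_norm_eq_inner inner_commute algebra_simps)
  hence "a * (norm (x' - c))\<^sup>2
      = a * (norm (x - c))\<^sup>2 + 2 * a * ((x - c) \<bullet> (x' - x)) + a * (norm (x' - x))\<^sup>2"
    by (simp only: ring_distribs mult.assoc)
  moreover have "(g x + (2 * a) *\<^sub>R (x - c)) \<bullet> (x' - x) = g x \<bullet> (x' - x) + 2 * a * ((x - c) \<bullet> (x' - x))"
    by (simp only: inner_add_left inner_scaleR_left)
  moreover have "(2 * a - \<rho>) / 2 * (norm (x' - x))\<^sup>2 = a * (norm (x' - x))\<^sup>2 - \<rho> / 2 * (norm (x' - x))\<^sup>2"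
    by (simp add: field_simps)
  ultimately show ?thesis by linarith
qed

lemma strongly_convex_min_growth:
  fixes \<phi> :: "'a::real_inner \<Rightarrow> real"
  assumes "convex S" and m: "m \<in> S" "\<And>x. x \<in> S \<Longrightarrow> \<phi> m \<le> \<phi> x"
    and sc: "\<And>x x'. x \<in> S \<Longrightarrow> x' \<in> S \<Longrightarrow> \<phi> x' \<ge> \<phi> x + G x \<bullet> (x' - x) + \<mu> / 2 * (norm (x' - x))\<^sup>2"
    and "a \<in> S"
  shows "\<phi> a \<ge> \<phi> m + \<mu> / 4 * (norm (a - m))\<^sup>2"
proof -
  define c where "c = (1/2) *\<^sub>R a + (1/2) *\<^sub>R m"
  have "c \<in> S" unfolding c_def by (rule convexD[OF \<open>convex S\<close> \<open>a \<in> S\<close> m(1)]) simp_all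
  have "a - c = (1/2) *\<^sub>R (a - m)" and "m - c = - ((1/2) *\<^sub>R (a - m))"
    by (simp_all add: c_def algebra_simps flip: scaleR_add_left)
  hence "\<phi> a \<ge> \<phi> c + (1/2) * (G c \<bullet> (a - m)) + \<mu> / 8 * (norm (a - m))\<^sup>2"
    and "\<phi> m \<ge> \<phi> c - (1/2) * (G c \<bullet> (a - m)) + \<mu> / 8 * (norm (a - m))\<^sup>2"
    using sc[OF \<open>c \<in> S\<close> \<open>a \<in> S\<close>] sc[OF \<open>c \<in> S\<close> m(1)] by (simp_all add: power_divide)
  moreover have "\<phi> m \<le> \<phi> c" using m(2)[OF \<open>c \<in> S\<close>] .
  ultimately show ?thesis by linarith
qed

lemma continuous_on_argmin:
  fixes F :: "'x::metric_space \<Rightarrow> 'y::metric_space \<Rightarrow> real"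
  assumes "compact X" and "compact Y" and F: "continuous_on (X \<times> Y) (\<lambda>(x, y). F x y)"
    and "\<mu> > 0" and m: "\<And>y. y \<in> Y \<Longrightarrow> m y \<in> X"
    and growth: "\<And>x y. x \<in> X \<Longrightarrow> y \<in> Y \<Longrightarrow> F (m y) y + \<mu> * (dist x (m y))\<^sup>2 \<le> F x y"
  shows "continuous_on Y m"
proof (rule uniformly_continuous_imp_continuous)
  \<comment> \<open>Adding the growth inequalities at \<open>y\<close> and \<open>y'\<close> bounds \<open>dist (m y') (m y)\<^sup>2\<close>
    by the oscillation of \<open>F\<close> in its second argument, uniformly in the first.\<close>
  have uc: "uniformly_continuous_on (X \<times> Y) (\<lambda>(x, y). F x y)"
    using compact_uniformly_continuous[OF F] compact_Times[OF assms(1,2)] by blast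
  show "uniformly_continuous_on Y m"
    unfolding uniformly_continuous_on_def
  proof (intro allI impI)
    fix e :: real assume "e > 0"
    then obtain d where "d > 0" and d: "\<And>p p'. p \<in> X \<times> Y \<Longrightarrow> p' \<in> X \<times> Y \<Longrightarrow> dist p' p < d
        \<Longrightarrow> dist ((\<lambda>(x, y). F x y) p') ((\<lambda>(x, y). F x y) p) < \<mu> * e\<^sup>2"
      using uc \<open>\<mu> > 0\<close> unfolding uniformly_continuous_on_def by (metis zero_less_power mult_pos_pos)
    have close: "\<bar>F x y' - F x y\<bar> < \<mu> * e\<^sup>2" if "x \<in> X" "y \<in> Y" "y' \<in> Y" "dist y' y < d" for x y y'
      using d[of "(x, y)" "(x, y')"] that by (simp add: dist_Pair_Pair dist_real_def)
    show "\<exists>d>0. \<forall>y\<in>Y. \<forall>y'\<in>Y. dist y' y < d \<longrightarrow> dist (m y') (m y) < e"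
    proof (intro exI[of _ d] conjI ballI impI \<open>d > 0\<close>)
      fix y y' assume y: "y \<in> Y" "y' \<in> Y" "dist y' y < d"
      have "2 * \<mu> * (dist (m y') (m y))\<^sup>2 \<le> (F (m y') y - F (m y') y') + (F (m y) y' - F (m y) y)"
        using growth[OF m[OF y(2)] y(1)] growth[OF m[OF y(1)] y(2)] by (simp add: dist_commute)
      also have "\<dots> < 2 * \<mu> * e\<^sup>2"
        using close[OF m[OF y(2)] y] close[OF m[OF y(1)] y] by (simp add: abs_less_iff)
      finally have "(dist (m y') (m y))\<^sup>2 < e\<^sup>2" using \<open>\<mu> > 0\<close> by simp
      thus "dist (m y') (m y) < e" using \<open>e > 0\<close> by (simp add: power_less_imp_less_base)
    qed
  qed
qed

lemma continuous_argmin_exists: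
  fixes F :: "'x::euclidean_space \<Rightarrow> 'y::metric_space \<Rightarrow> real"
  assumes X: "X \<noteq> {}" "convex X" "compact X" and "compact Y"
    and F: "continuous_on (X \<times> Y) (\<lambda>(x, y). F x y)" and "\<mu> > 0"
    and sc: "\<And>x x' y. x \<in> X \<Longrightarrow> x' \<in> X \<Longrightarrow> y \<in> Y \<Longrightarrow>
               F x' y \<ge> F x y + G x y \<bullet> (x' - x) + \<mu> / 2 * (norm (x' - x))\<^sup>2"
  obtains m where "\<And>y. y \<in> Y \<Longrightarrow> m y \<in> X" and "\<And>x y. x \<in> X \<Longrightarrow> y \<in> Y \<Longrightarrow> F (m y) y \<le> F x y"
    and "continuous_on Y m"
proof -
  have "\<exists>x\<in>X. \<forall>x'\<in>X. F x y \<le> F x' y" if "y \<in> Y" for y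
  proof (rule continuous_attains_inf[OF X(3,1)])
    have "continuous_on X (\<lambda>x. (\<lambda>(x, y). F x y) (x, y))"
      by (rule continuous_on_compose2[OF F]) (use that in \<open>auto intro!: continuous_intros\<close>)
    thus "continuous_on X (\<lambda>x. F x y)" by simp
  qed
  then obtain m where m: "\<And>y. y \<in> Y \<Longrightarrow> m y \<in> X" "\<And>x y. x \<in> X \<Longrightarrow> y \<in> Y \<Longrightarrow> F (m y) y \<le> F x y"
    by metis
  have "F (m y) y + \<mu> / 4 * (dist x (m y))\<^sup>2 \<le> F x y" if "x \<in> X" "y \<in> Y" for x y
    using strongly_convex_min_growth[OF X(2) m(1)[OF that(2)] m(2)[OF _ that(2)] sc[OF _ _ that(2)] that(1)]
    by (simp add: dist_norm)
  hence "continuous_on Y m"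
    using continuous_on_argmin[OF X(3) \<open>compact Y\<close> F, of "\<mu> / 4" m] m(1) \<open>\<mu> > 0\<close> by simp
  with m show ?thesis using that by blast
qed

lemma saddle_point_exists:
  fixes F :: "'x::euclidean_space \<Rightarrow> 'y::euclidean_space \<Rightarrow> real"
  assumes X: "X \<noteq> {}" "convex X" "compact X" and Y: "Y \<noteq> {}" "convex Y" "compact Y"
    and F: "continuous_on (X \<times> Y) (\<lambda>(x, y). F x y)" and "\<mu> > 0"
    and cvx: "\<And>x x' y. x \<in> X \<Longrightarrow> x' \<in> X \<Longrightarrow> y \<in> Y \<Longrightarrow>
               F x' y \<ge> F x y + Gx x y \<bullet> (x' - x) + \<mu> / 2 * (norm (x' - x))\<^sup>2"
    and ccv: "\<And>x y y'. x \<in> X \<Longrightarrow> y \<in> Y \<Longrightarrow> y' \<in> Y \<Longrightarrow>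
               - F x y' \<ge> - F x y + Gy x y \<bullet> (y' - y) + \<mu> / 2 * (norm (y' - y))\<^sup>2"
  obtains xs ys where "xs \<in> X" "ys \<in> Y"
    "\<And>x. x \<in> X \<Longrightarrow> F xs ys \<le> F x ys" "\<And>y. y \<in> Y \<Longrightarrow> F xs y \<le> F xs ys"
proof -
  obtain mx where mx: "\<And>y. y \<in> Y \<Longrightarrow> mx y \<in> X" "\<And>x y. x \<in> X \<Longrightarrow> y \<in> Y \<Longrightarrow> F (mx y) y \<le> F x y"
      "continuous_on Y mx"
    using continuous_argmin_exists[OF X Y(3) F \<open>\<mu> > 0\<close> cvx] by blast
  have F': "continuous_on (Y \<times> X) (\<lambda>(y, x). - F x y)"
  proof -
    have "continuous_on (Y \<times> X) (\<lambda>p. (\<lambda>(x, y). F x y) (snd p, fst p))"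
      by (rule continuous_on_compose2[OF F]) (auto intro!: continuous_intros)
    hence "continuous_on (Y \<times> X) (\<lambda>p. - (\<lambda>(x, y). F x y) (snd p, fst p))"
      by (rule continuous_on_minus)
    thus ?thesis by (simp add: case_prod_unfold)
  qed
  obtain my where my: "\<And>x. x \<in> X \<Longrightarrow> my x \<in> Y" "\<And>x y. y \<in> Y \<Longrightarrow> x \<in> X \<Longrightarrow> - F x (my x) \<le> - F x y"
      "continuous_on X my"
    by (rule continuous_argmin_exists[OF Y X(3) F' \<open>\<mu> > 0\<close>, of "\<lambda>y x. Gy x y"]) (use ccv in auto)
  have "compact (X \<times> Y)" "convex (X \<times> Y)" "X \<times> Y \<noteq> {}"
    using X Y by (simp_all add: compact_Times convex_Times)
  moreover have "continuous_on (X \<times> Y) (\<lambda>(x, y). (mx y, my x))"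
    unfolding case_prod_unfold
    by (intro continuous_on_Pair continuous_on_compose2[OF mx(3)] continuous_on_compose2[OF my(3)]
        continuous_intros) auto
  moreover have "(\<lambda>(x, y). (mx y, my x)) \<in> X \<times> Y \<rightarrow> X \<times> Y" using mx(1) my(1) by auto
  ultimately obtain p where "p \<in> X \<times> Y" "(\<lambda>(x, y). (mx y, my x)) p = p"
    by (rule brouwer)
  then obtain xs ys where "xs \<in> X" "ys \<in> Y" "mx ys = xs" "my xs = ys" by auto
  with mx(2) my(2) show ?thesis using that by force
qed

section \<open>The resolvent of \<open>B + R\<close>\<close>

lemma has_real_derivative_along_line:
  fixes f :: "'a::real_normed_vector \<Rightarrow> real"
  assumes "f differentiable (at p)"
  shows "((\<lambda>t. f (p + t *\<^sub>R v)) has_real_derivative frechet_derivative f (at p) v) (at 0)"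
proof -
  define L where "L = frechet_derivative f (at p)"
  have "(f has_derivative L) (at (p + 0 *\<^sub>R v))"
    using assms unfolding L_def frechet_derivative_works by simp
  moreover have "((\<lambda>t. p + t *\<^sub>R v) has_derivative (\<lambda>t. t *\<^sub>R v)) (at 0)"
    by (auto intro!: derivative_eq_intros)
  ultimately have "((\<lambda>t. f (p + t *\<^sub>R v)) has_derivative (\<lambda>t. L (t *\<^sub>R v))) (at 0)"
    by (metis has_derivative_compose)
  moreover have "(\<lambda>t. L (t *\<^sub>R v)) = (*) (L v)"
    using \<open>(f has_derivative L) _\<close> has_derivative_linear linear_scale by (fastforce simp: fun_eq_iff)
  ultimately show ?thesis by (simp add: has_field_derivative_def L_def)
qed

lemma has_real_derivative_sq_norm_along_line:
  "((\<lambda>t. (norm (p + t *\<^sub>R v))\<^sup>2) has_real_derivative 2 * (p \<bullet> v)) (at 0)"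
proof -
  have "(\<lambda>t. (norm (p + t *\<^sub>R v))\<^sup>2) = (\<lambda>t. p \<bullet> p + 2 * t * (p \<bullet> v) + t\<^sup>2 * (v \<bullet> v))"
    unfolding power2_norm_eq_inner
    by (simp add: fun_eq_iff inner_add_left inner_add_right inner_commute algebra_simps power2_eq_square)
  thus ?thesis by (auto intro!: derivative_eq_intros)
qed

lemma convex_min_deriv_nonneg:
  fixes h :: "'a::real_vector \<Rightarrow> real"
  assumes S: "convex S" "x0 \<in> S" "x \<in> S" and min: "\<And>y. y \<in> S \<Longrightarrow> h x0 \<le> h y"
    and der: "((\<lambda>t. h (x0 + t *\<^sub>R (x - x0))) has_real_derivative D) (at 0)"
  shows "0 \<le> D"
proof (rule ccontr)
  assume "\<not> 0 \<le> D"
  then obtain d where "d > 0" and dec: "\<And>t. 0 < t \<Longrightarrow> t < d \<Longrightarrow> h (x0 + t *\<^sub>R (x - x0)) < h x0"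
    using DERIV_neg_dec_right[OF der] by auto
  define t where "t = min (d / 2) 1"
  have t: "0 < t" "t < d" "t \<le> 1" using \<open>d > 0\<close> by (auto simp: t_def)
  have "x0 + t *\<^sub>R (x - x0) = (1 - t) *\<^sub>R x0 + t *\<^sub>R x" by (simp add: algebra_simps)
  hence "x0 + t *\<^sub>R (x - x0) \<in> S" using convexD[OF S, of "1 - t" t] t by simp
  thus False using dec[OF t(1,2)] min by fastforce
qed

lemma linear_Basis_sum_inner:
  fixes L :: "'a::euclidean_space \<Rightarrow> real"
  assumes "linear L"
  shows "(\<Sum>i\<in>Basis. L i *\<^sub>R i) \<bullet> d = L d"
proof -
  have "(\<Sum>i\<in>Basis. L i *\<^sub>R i) \<bullet> d = (\<Sum>i\<in>Basis. L i * (i \<bullet> d))"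
    by (simp add: inner_sum_left)
  also have "\<dots> = (\<Sum>i\<in>Basis. (d \<bullet> i) * L i)"
    by (simp add: inner_commute mult.commute)
  also have "\<dots> = L (\<Sum>i\<in>Basis. (d \<bullet> i) *\<^sub>R i)"
    by (simp add: linear_sum[OF assms] linear_scale[OF assms])
  finally show ?thesis by (simp add: euclidean_representation)
qed

lemma frechet_derivative_eq_grad:
  fixes f :: "(real^'p::finite) \<times> (real^'q::finite) \<Rightarrow> real"
  assumes "f differentiable (at (x, y))"
  shows "frechet_derivative f (at (x, y)) (d, e) = grad_x f x y \<bullet> d + grad_y f x y \<bullet> e"
proof -
  define L where "L = frechet_derivative f (at (x, y))"
  have L: "linear L" using assms frechet_derivative_works has_derivative_linear L_def by blast
  have "linear (\<lambda>v. L (v, 0))"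
    using linear_compose[OF bounded_linear.linear[OF bounded_linear_Pair[OF bounded_linear_ident
        bounded_linear_zero]] L] by (simp add: o_def)
  moreover have "linear (\<lambda>v. L (0, v))"
    using linear_compose[OF bounded_linear.linear[OF bounded_linear_Pair[OF bounded_linear_zero
        bounded_linear_ident]] L] by (simp add: o_def)
  ultimately have "grad_x f x y \<bullet> d = L (d, 0)" and "grad_y f x y \<bullet> e = L (0, e)"
    by (simp_all add: grad_x_def grad_y_def L_def[symmetric] linear_Basis_sum_inner)
  moreover have "L (d, e) = L (d, 0) + L (0, e)" using linear_add[OF L, of "(d, 0)" "(0, e)"] by simp
  ultimately show ?thesis by (simp add: L_def)
qed

lemma weakly_monotone_resolvent_unique:
  fixes F :: "'a::real_inner \<Rightarrow> 'a set"
  assumes F: "weakly_monotone \<rho> F" and \<alpha>: "0 \<le> \<alpha>" "\<alpha> * \<rho> < 1"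
    and g: "g \<in> F u" and g': "g' \<in> F u'" and eq: "u + \<alpha> *\<^sub>R g = u' + \<alpha> *\<^sub>R g'"
  shows "u = u'"
proof -
  have d: "u - u' = \<alpha> *\<^sub>R (g' - g)" using eq by (simp add: algebra_simps)
  have "(norm (u - u'))\<^sup>2 = - \<alpha> * ((g - g') \<bullet> (u - u'))"
    unfolding power2_norm_eq_inner d by (simp add: algebra_simps)
  also have "\<dots> \<le> \<alpha> * \<rho> * (norm (u - u'))\<^sup>2"
  proof -
    have "- \<rho> * (norm (u - u'))\<^sup>2 \<le> (g - g') \<bullet> (u - u')"
      using F g g' unfolding weakly_monotone_def by blast
    from mult_left_mono[OF this \<alpha>(1)] show ?thesis by (simp add: algebra_simps)
  qed
  finally have "(1 - \<alpha> * \<rho>) * (norm (u - u'))\<^sup>2 \<le> 0" by (simp add: algebra_simps)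
  thus ?thesis using \<alpha>(2) by (simp add: mult_le_0_iff)
qed

definition regularized_saddle_fun ::
    "real \<Rightarrow> ((real^'p::finite) \<times> (real^'q::finite) \<Rightarrow> real) \<Rightarrow> (real^'p) \<times> (real^'q)
      \<Rightarrow> (real^'p) \<times> (real^'q) \<Rightarrow> real" where
  "regularized_saddle_fun a f c z =
     f z + a * (norm (fst z - fst c))\<^sup>2 - a * (norm (snd z - snd c))\<^sup>2"

lemma regularized_saddle_fun_strongly_convex_concave:
  fixes f :: "(real^'p::finite) \<times> (real^'q::finite) \<Rightarrow> real"
  assumes wcvx: "\<And>y. y \<in> Y \<Longrightarrow> weakly_convex_on \<rho> X (\<lambda>x. f (x, y)) (\<lambda>x. grad_x f x y)"
    and wccv: "\<And>x. x \<in> X \<Longrightarrow> weakly_convex_on \<rho> Y (\<lambda>y. - f (x, y)) (\<lambda>y. - grad_y f x y)"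
    and "x \<in> X" "x' \<in> X" "y \<in> Y" "y' \<in> Y"
  shows "regularized_saddle_fun a f c (x', y) \<ge> regularized_saddle_fun a f c (x, y)
           + (grad_x f x y + (2 * a) *\<^sub>R (x - fst c)) \<bullet> (x' - x)
           + (2 * a - \<rho>) / 2 * (norm (x' - x))\<^sup>2"
    and "- regularized_saddle_fun a f c (x, y') \<ge> - regularized_saddle_fun a f c (x, y)
           + (- grad_y f x y + (2 * a) *\<^sub>R (y - snd c)) \<bullet> (y' - y)
           + (2 * a - \<rho>) / 2 * (norm (y' - y))\<^sup>2"
  using weakly_convex_on_add_sq_dist[OF wcvx[OF \<open>y \<in> Y\<close>] \<open>x \<in> X\<close> \<open>x' \<in> X\<close>, of a "fst c"]
    weakly_convex_on_add_sq_dist[OF wccv[OF \<open>x \<in> X\<close>] \<open>y \<in> Y\<close> \<open>y' \<in> Y\<close>, of a "snd c"]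
  by (simp_all add: regularized_saddle_fun_def)

lemma regularized_saddle_fun_derivative:
  fixes f :: "(real^'p::finite) \<times> (real^'q::finite) \<Rightarrow> real"
  assumes "f differentiable (at (x, y))"
  shows "((\<lambda>t. regularized_saddle_fun a f c ((x, y) + t *\<^sub>R (d, e))) has_real_derivative
      (grad_x f x y + (2 * a) *\<^sub>R (x - fst c)) \<bullet> d - (- grad_y f x y + (2 * a) *\<^sub>R (y - snd c)) \<bullet> e)
      (at 0)"
proof -
  have "regularized_saddle_fun a f c ((x, y) + t *\<^sub>R (d, e)) = f ((x, y) + t *\<^sub>R (d, e))
      + a * (norm ((x - fst c) + t *\<^sub>R d))\<^sup>2 - a * (norm ((y - snd c) + t *\<^sub>R e))\<^sup>2" for t
    by (simp add: regularized_saddle_fun_def algebra_simps)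
  hence "((\<lambda>t. regularized_saddle_fun a f c ((x, y) + t *\<^sub>R (d, e))) has_real_derivative
      frechet_derivative f (at (x, y)) (d, e) + a * (2 * ((x - fst c) \<bullet> d)) - a * (2 * ((y - snd c) \<bullet> e)))
      (at 0)"
    by (simp only:) (intro DERIV_diff DERIV_add DERIV_cmult has_real_derivative_along_line[OF assms]
        has_real_derivative_sq_norm_along_line)
  thus ?thesis
    using frechet_derivative_eq_grad[OF assms] by (simp add: inner_add_left algebra_simps)
qed

lemma node_resolvent_exists:
  fixes f :: "(real^'p::finite) \<times> (real^'q::finite) \<Rightarrow> real"
  assumes X: "X \<noteq> {}" "convex X" "compact X" and Y: "Y \<noteq> {}" "convex Y" "compact Y"
    and \<alpha>: "0 < \<alpha>" "\<alpha> * \<rho> < 1" and diff: "\<And>z. f differentiable (at z)"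
    and wcvx: "\<And>y. y \<in> Y \<Longrightarrow> weakly_convex_on \<rho> X (\<lambda>x. f (x, y)) (\<lambda>x. grad_x f x y)"
    and wccv: "\<And>x. x \<in> X \<Longrightarrow> weakly_convex_on \<rho> Y (\<lambda>y. - f (x, y)) (\<lambda>y. - grad_y f x y)"
  shows "\<exists>u. (1 / \<alpha>) *\<^sub>R (c - u) - Bn f u \<in> Rn X Y u"
proof -
  define a where "a = 1 / (2 * \<alpha>)"
  define \<Phi> where "\<Phi> = regularized_saddle_fun a f c"
  define Gx where "Gx x y = grad_x f x y + (2 * a) *\<^sub>R (x - fst c)" for x y
  define Gy where "Gy x y = - grad_y f x y + (2 * a) *\<^sub>R (y - snd c)" for x y
  have "2 * a - \<rho> > 0" using \<alpha> by (simp add: a_def field_simps)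
  have "continuous_on UNIV f"
    using diff by (simp add: continuous_at_imp_continuous_on differentiable_imp_continuous_within)
  hence "continuous_on UNIV \<Phi>"
    unfolding \<Phi>_def regularized_saddle_fun_def by (intro continuous_intros)
  hence "continuous_on (X \<times> Y) (\<lambda>(x, y). \<Phi> (x, y))"
    unfolding case_prod_eta by (rule continuous_on_subset[OF _ subset_UNIV])
  then obtain xs ys where "xs \<in> X" "ys \<in> Y"
      and xmin: "\<forall>x\<in>X. \<Phi> (xs, ys) \<le> \<Phi> (x, ys)" and ymax: "\<forall>y\<in>Y. \<Phi> (xs, y) \<le> \<Phi> (xs, ys)"
    by (rule saddle_point_exists[where F = "\<lambda>x y. \<Phi> (x, y)", OF X Y _ \<open>2 * a - \<rho> > 0\<close>,
          where Gx = Gx and Gy = Gy])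
      (use regularized_saddle_fun_strongly_convex_concave[OF wcvx wccv] in
        \<open>auto simp: \<Phi>_def Gx_def Gy_def\<close>)
  have der: "((\<lambda>t. \<Phi> ((xs, ys) + t *\<^sub>R (d, e))) has_real_derivative Gx xs ys \<bullet> d - Gy xs ys \<bullet> e) (at 0)"
    for d e
    unfolding \<Phi>_def Gx_def Gy_def by (rule regularized_saddle_fun_derivative[OF diff])
  have "0 \<le> Gx xs ys \<bullet> (x - xs)" if "x \<in> X" for x
    using convex_min_deriv_nonneg[OF X(2) \<open>xs \<in> X\<close> that, of "\<lambda>x. \<Phi> (x, ys)"] xmin
      der[of "x - xs" 0] by auto
  moreover have "0 \<le> Gy xs ys \<bullet> (y - ys)" if "y \<in> Y" for y
    using convex_min_deriv_nonneg[OF Y(2) \<open>ys \<in> Y\<close> that, of "\<lambda>y. - \<Phi> (xs, y)"] ymax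
      DERIV_minus[OF der[of 0 "y - ys"]] by auto
  moreover have "(1 / \<alpha>) *\<^sub>R (c - (xs, ys)) - Bn f (xs, ys) = (- Gx xs ys, - Gy xs ys)"
    by (simp add: Bn_def Gx_def Gy_def a_def algebra_simps prod_eq_iff)
  ultimately have "(1 / \<alpha>) *\<^sub>R (c - (xs, ys)) - Bn f (xs, ys) \<in> Rn X Y (xs, ys)"
    using \<open>xs \<in> X\<close> \<open>ys \<in> Y\<close> by (auto simp: Rn_def normal_cone_def)
  thus ?thesis by blast
qed

lemma BR_resolvent_well_defined:
  fixes f :: "'n::finite \<Rightarrow> (real^'p::finite) \<times> (real^'q::finite) \<Rightarrow> real"
  assumes X: "X \<noteq> {}" "convex X" "compact X" and Y: "Y \<noteq> {}" "convex Y" "compact Y"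
    and \<alpha>: "0 < \<alpha>" "\<alpha> * \<rho> < 1" and diff: "\<And>n z. f n differentiable (at z)"
    and wcvx: "\<And>n y. y \<in> Y \<Longrightarrow> weakly_convex_on \<rho> X (\<lambda>x. f n (x, y)) (\<lambda>x. grad_x (f n) x y)"
    and wccv: "\<And>n x. x \<in> X \<Longrightarrow> weakly_convex_on \<rho> Y (\<lambda>y. - f n (x, y)) (\<lambda>y. - grad_y (f n) x y)"
  shows "inverse_well_defined (\<lambda>u. {u + \<alpha> *\<^sub>R g | g. g \<in> BR f X Y u})"
  unfolding inverse_well_defined_def
proof
  fix z :: "('p, 'q, 'n) stack"
  have "\<exists>u. (1 / \<alpha>) *\<^sub>R (z $ n - u) - Bn (f n) u \<in> Rn X Y u" for n
  proof (rule node_resolvent_exists[OF X Y \<alpha>])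
    show "\<And>z. f n differentiable (at z)" by (rule diff)
    show "\<And>y. y \<in> Y \<Longrightarrow> weakly_convex_on \<rho> X (\<lambda>x. f n (x, y)) (\<lambda>x. grad_x (f n) x y)"
      by (rule wcvx)
    show "\<And>x. x \<in> X \<Longrightarrow> weakly_convex_on \<rho> Y (\<lambda>y. - f n (x, y)) (\<lambda>y. - grad_y (f n) x y)"
      by (rule wccv)
  qed
  then obtain U where U: "\<And>n. (1 / \<alpha>) *\<^sub>R (z $ n - U n) - Bn (f n) (U n) \<in> Rn X Y (U n)"
    by metis
  define u where "u = (\<chi> n. U n)"
  define g where "g = (1 / \<alpha>) *\<^sub>R (z - u)"
  have g: "g \<in> BR f X Y u" using U by (simp add: BR_def u_def g_def)
  have z: "z = u + \<alpha> *\<^sub>R g" using \<alpha>(1) by (simp add: g_def)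
  show "\<exists>!u. z \<in> {u + \<alpha> *\<^sub>R g | g. g \<in> BR f X Y u}"
  proof (rule ex1I)
    show "z \<in> {u + \<alpha> *\<^sub>R g | g. g \<in> BR f X Y u}" using g z by blast
  next
    fix u' assume "z \<in> {u' + \<alpha> *\<^sub>R g | g. g \<in> BR f X Y u'}"
    then obtain g' where g': "g' \<in> BR f X Y u'" and eq: "u' + \<alpha> *\<^sub>R g' = u + \<alpha> *\<^sub>R g"
      using z by blast
    have "0 \<le> \<alpha>" using \<alpha>(1) by simp
    show "u' = u"
      by (rule weakly_monotone_resolvent_unique[OF BR_weakly_monotone[OF wcvx wccv] \<open>0 \<le> \<alpha>\<close> \<alpha>(2) g' g eq])
  qed
qed

section \<open>Strong monotonicity of \<open>D + T\<close>\<close>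

lemma quadratic_form_nonneg:
  fixes p q s A B :: real
  assumes "p > 0" and "s\<^sup>2 \<le> p * q"
  shows "2 * s * A * B \<le> p * A\<^sup>2 + q * B\<^sup>2"
proof -
  have "0 \<le> (p * A - s * B)\<^sup>2 + (p * q - s\<^sup>2) * B\<^sup>2"
    using assms(2) by (intro add_nonneg_nonneg mult_nonneg_nonneg) simp_all
  also have "\<dots> = p * (p * A\<^sup>2 + q * B\<^sup>2 - 2 * s * A * B)"
    by (simp add: algebra_simps power2_eq_square)
  finally show ?thesis using \<open>p > 0\<close> by (simp add: zero_le_mult_iff)
qed

lemma strong_monotonicity_coefficient:
  fixes s k A B :: real
  assumes "0 \<le> s" and "s \<le> 1" and "k \<le> (1 - s) / 2"
  shows "(1 - s\<^sup>2) / 4 * (A\<^sup>2 + B\<^sup>2) \<le> (1 - k) * A\<^sup>2 + B\<^sup>2 - 2 * s * A * B"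
proof -
  have "(1 + s)\<^sup>2 - 4 * s = (1 - s)\<^sup>2" and "3 + s\<^sup>2 - 4 * s = (1 - s) * (3 - s)"
    by (simp_all add: power2_eq_square algebra_simps)
  moreover have "0 \<le> (1 - s) * (3 - s)"
    using assms(2) by (intro mult_nonneg_nonneg) simp_all
  ultimately have "4 * s \<le> (1 + s)\<^sup>2" and "4 * s \<le> 3 + s\<^sup>2"
    by (metis diff_ge_0_iff_ge zero_le_power2)+
  hence "(4 * s) * (4 * s) \<le> (1 + s)\<^sup>2 * (3 + s\<^sup>2)"
    using assms(1) by (intro mult_mono) simp_all
  hence "s\<^sup>2 \<le> ((1 + s)\<^sup>2 / 4) * ((3 + s\<^sup>2) / 4)"
    by (simp add: power2_eq_square)
  hence "2 * s * A * B \<le> (1 + s)\<^sup>2 / 4 * A\<^sup>2 + (3 + s\<^sup>2) / 4 * B\<^sup>2"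
    by (rule quadratic_form_nonneg[rotated]) (use assms(1) in \<open>simp add: add_pos_nonneg\<close>)
  moreover have "(1 + s) / 2 * A\<^sup>2 \<le> (1 - k) * A\<^sup>2"
    using assms(3) by (intro mult_right_mono) simp_all
  moreover have "(1 + s) / 2 * A\<^sup>2 + B\<^sup>2 - (1 - s\<^sup>2) / 4 * (A\<^sup>2 + B\<^sup>2)
      = (1 + s)\<^sup>2 / 4 * A\<^sup>2 + (3 + s\<^sup>2) / 4 * B\<^sup>2"
    by (simp add: power2_eq_square field_simps)
  ultimately show ?thesis by linarith
qed

lemma DT_memE:
  assumes "w \<in> DT f X Y W \<alpha> (z, q)"
  obtains g where "g \<in> BR f X Y z" and "w = (z + 2 *\<^sub>R Uop W q + \<alpha> *\<^sub>R g, q)"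
proof -
  obtain g where "g \<in> BR f X Y z"
    and "w = (z + Uop W q, Uop W z + q) + (\<alpha> *\<^sub>R g + Uop W q, - Uop W z)"
    using assms unfolding DT_def Let_def by auto
  moreover have "(z + Uop W q, Uop W z + q) + (\<alpha> *\<^sub>R g + Uop W q, - Uop W z)
      = (z + 2 *\<^sub>R Uop W q + \<alpha> *\<^sub>R g, q)"
    by (simp add: scaleR_2)
  ultimately show ?thesis using that by simp
qed

lemma DT_inner_diff:
  fixes W :: "real^'n^'n" and z q z' q' :: "('p::finite, 'q::finite, 'n::finite) stack"
  assumes sym: "transpose W = W" and le: "\<And>v. v \<bullet> (W *v v) \<le> v \<bullet> v"
    and w: "w \<in> DT f X Y W \<alpha> (z, q)" and w': "w' \<in> DT f X Y W \<alpha> (z', q')"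
  obtains g g' where "g \<in> BR f X Y z" and "g' \<in> BR f X Y z'"
    and "(w - w') \<bullet> ((z, q) - (z', q')) = (norm (z - z'))\<^sup>2 + 2 * (Uop W (q - q') \<bullet> (z - z'))
           + \<alpha> * ((g - g') \<bullet> (z - z')) + (norm (q - q'))\<^sup>2"
proof -
  obtain g where g: "g \<in> BR f X Y z" and wg: "w = (z + 2 *\<^sub>R Uop W q + \<alpha> *\<^sub>R g, q)"
    using w by (rule DT_memE)
  obtain g' where g': "g' \<in> BR f X Y z'" and wg': "w' = (z' + 2 *\<^sub>R Uop W q' + \<alpha> *\<^sub>R g', q')"
    using w' by (rule DT_memE)
  have "w - w' = ((z - z') + 2 *\<^sub>R (Uop W q - Uop W q') + \<alpha> *\<^sub>R (g - g'), q - q')"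
    by (simp add: wg wg' algebra_simps)
  moreover have "Uop W q - Uop W q' = Uop W (q - q')"
    by (rule linear_diff[OF Uop_square_root(1)[OF sym le], symmetric])
  ultimately have "w - w' = ((z - z') + 2 *\<^sub>R Uop W (q - q') + \<alpha> *\<^sub>R (g - g'), q - q')"
    by simp
  hence "(w - w') \<bullet> ((z, q) - (z', q')) = (norm (z - z'))\<^sup>2 + 2 * (Uop W (q - q') \<bullet> (z - z'))
           + \<alpha> * ((g - g') \<bullet> (z - z')) + (norm (q - q'))\<^sup>2"
    by (simp add: inner_add_left power2_norm_eq_inner)
  with g g' show ?thesis using that by blast
qed

lemma DT_strongly_monotone:
  fixes f :: "'n::finite \<Rightarrow> (real^'p::finite) \<times> (real^'q::finite) \<Rightarrow> real" and W :: "real^'n^'n"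
  assumes wcvx: "\<And>n y. y \<in> Y \<Longrightarrow> weakly_convex_on \<rho> X (\<lambda>x. f n (x, y)) (\<lambda>x. grad_x (f n) x y)"
    and wccv: "\<And>n x. x \<in> X \<Longrightarrow> weakly_convex_on \<rho> Y (\<lambda>y. - f n (x, y)) (\<lambda>y. - grad_y (f n) x y)"
    and sym: "transpose W = W" and pd: "\<And>v. v \<noteq> 0 \<Longrightarrow> v \<bullet> (W *v v) > 0"
    and le: "\<And>v. v \<bullet> (W *v v) \<le> v \<bullet> v"
    and \<alpha>: "0 \<le> \<alpha>" "\<alpha> * \<rho> \<le> (1 - sqrt (1 - lambda_min W)) / 2"
  shows "strongly_monotone (lambda_min W / 4) (DT f X Y W \<alpha>)"
  unfolding strongly_monotone_def
proof (intro allI impI)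
  fix v v' w w' :: "('p, 'q, 'n) stack \<times> ('p, 'q, 'n) stack"
  assume w: "w \<in> DT f X Y W \<alpha> v" and w': "w' \<in> DT f X Y W \<alpha> v'"
  define s where "s = sqrt (1 - lambda_min W)"
  obtain z q z' q' where v: "v = (z, q)" and v': "v' = (z', q')" by (cases v, cases v')
  define A B where "A = norm (z - z')" and "B = norm (q - q')"
  obtain g g' where g: "g \<in> BR f X Y z" and g': "g' \<in> BR f X Y z'" and "(w - w') \<bullet> (v - v')
      = A\<^sup>2 + 2 * (Uop W (q - q') \<bullet> (z - z')) + \<alpha> * ((g - g') \<bullet> (z - z')) + B\<^sup>2"
    using DT_inner_diff[OF sym le] w w' unfolding v v' A_def B_def by metis
  moreover have "Uop W (q - q') \<bullet> (z - z') \<ge> - (s * B * A)"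
  proof -
    have "\<bar>Uop W (q - q') \<bullet> (z - z')\<bar> \<le> norm (Uop W (q - q')) * A"
      unfolding A_def by (rule Cauchy_Schwarz_ineq2)
    also have "\<dots> \<le> s * B * A"
      unfolding s_def B_def A_def by (intro mult_right_mono norm_Uop_le[OF sym le]) simp
    finally show ?thesis by linarith
  qed
  moreover have "\<alpha> * ((g - g') \<bullet> (z - z')) \<ge> - (\<alpha> * \<rho>) * A\<^sup>2"
  proof -
    have "weakly_monotone \<rho> (BR f X Y)" using wcvx wccv by (rule BR_weakly_monotone)
    hence "- \<rho> * A\<^sup>2 \<le> (g - g') \<bullet> (z - z')"
      using g g' unfolding weakly_monotone_def A_def by blast
    from mult_left_mono[OF this \<alpha>(1)] show ?thesis by simp
  qed
  moreover have "lambda_min W / 4 * (A\<^sup>2 + B\<^sup>2) \<le> (1 - \<alpha> * \<rho>) * A\<^sup>2 + B\<^sup>2 - 2 * s * A * B"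
    using strong_monotonicity_coefficient[of s "\<alpha> * \<rho>" A B] lambda_min_bounds[OF sym pd le] \<alpha>(2)
    by (simp add: s_def)
  moreover have "(norm (v - v'))\<^sup>2 = A\<^sup>2 + B\<^sup>2"
    by (simp add: v v' A_def B_def norm_Pair)
  ultimately show "(w - w') \<bullet> (v - v') \<ge> lambda_min W / 4 * (norm (v - v'))\<^sup>2"
    by (simp add: algebra_simps)
qed

theorem lemma2:
  fixes X :: "(real^'p) set" and Y :: "(real^'q) set"
    and f :: "'n::finite \<Rightarrow> (real^'p) \<times> (real^'q) \<Rightarrow> real"
    and W :: "real^'n^'n" and \<rho> \<alpha> :: real
  assumes X: "X \<noteq> {}" "convex X" "closed X" "bounded X"
    and Y: "Y \<noteq> {}" "convex Y" "closed Y" "bounded Y"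
    and rho: "\<rho> > 0"
    and diff: "\<And>n z. f n differentiable (at z)"
    and wcvx: "\<And>n y. y \<in> Y \<Longrightarrow>
                 weakly_convex_on \<rho> X (\<lambda>x. f n (x, y)) (\<lambda>x. grad_x (f n) x y)"
    and wccv: "\<And>n x. x \<in> X \<Longrightarrow>
                 weakly_convex_on \<rho> Y (\<lambda>y. - f n (x, y)) (\<lambda>y. - grad_y (f n) x y)"
    and Wsym: "transpose W = W"
    and Wone: "W *v (\<chi> i. 1) = (\<chi> i. 1)"
    and Wnull: "{v. v - W *v v = 0} = span {(\<chi> i. 1) :: real^'n}"
    and Wpd: "\<And>v. v \<noteq> 0 \<Longrightarrow> v \<bullet> (W *v v) > 0"
    and WleI: "\<And>v. v \<bullet> (W *v v) \<le> v \<bullet> v"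
    and alpha: "\<alpha> > 0"
  shows "weakly_monotone \<rho> (BR f X Y)
         \<and> (\<alpha> < 1 / \<rho> \<longrightarrow>
              inverse_well_defined (\<lambda>u. {u + \<alpha> *\<^sub>R g | g. g \<in> BR f X Y u}))
         \<and> (\<alpha> \<le> (1 - sqrt (1 - lambda_min W)) / (2 * \<rho>) \<longrightarrow>
              strongly_monotone (lambda_min W / 4) (DT f X Y W \<alpha>))"
proof (intro conjI impI)
  show "weakly_monotone \<rho> (BR f X Y)"
    using wcvx wccv by (rule BR_weakly_monotone)
next
  assume "\<alpha> < 1 / \<rho>"
  hence "\<alpha> * \<rho> < 1" using rho by (simp add: field_simps)
  moreover have "compact X" "compact Y" using X Y by (simp_all add: compact_eq_bounded_closed)
  ultimately show "inverse_well_defined (\<lambda>u. {u + \<alpha> *\<^sub>R g | g. g \<in> BR f X Y u})"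
    using X(1,2) Y(1,2) alpha
    by (intro BR_resolvent_well_defined[where f = f, OF _ _ _ _ _ _ _ _ diff wcvx wccv]) simp_all
next
  assume "\<alpha> \<le> (1 - sqrt (1 - lambda_min W)) / (2 * \<rho>)"
  hence "\<alpha> * \<rho> \<le> (1 - sqrt (1 - lambda_min W)) / 2" using rho by (simp add: field_simps)
  with alpha show "strongly_monotone (lambda_min W / 4) (DT f X Y W \<alpha>)"
    by (intro DT_strongly_monotone[where f = f, OF wcvx wccv Wsym Wpd WleI]) simp_all
qed

end
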